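(* Let $\lambda=(\lambda_1>\lambda_2>\dots>\lambda_r>0)$ be a strict partition and let $q_\lambda$ be the rational function in $q$ obtained from the Schur $Q$-function $Q_\lambda$, written as a polynomial in $Q_{(1)},Q_{(2)},\dots$, by substituting $Q_{(m)}\mapsto a_m$ for every $m\ge1$, where $$a_m=\prod_{j=1}^m \mathbf{i}\,\frac{q^{j-1}+q^{1-j}}{q^j-q^{-j}}.$$ Then $$q_\lambda=\prod_{j=1}^r a_{\lambda_j}\prod_{1\le i<j\le r}\frac{[\lambda_i-\lambda_j]}{[\lambda_i+\lambda_j]}.$$
   Context: $\mathbf{i}=\sqrt{-1}$ and $[k]=(q^k-q^{-k})/(q-q^{-1})$ is the quantum integer, $q$ a formal variable. Schur $Q$-functions as polynomials in $Q_{(1)},Q_{(2)},\dots$: set $Q_{(0)}=1$; for integers $r>s\ge0$ set $Q_{(r,s)}=Q_{(r)}Q_{(s)}+2\sum_{i=1}^{s}(-1)^iQ_{(r+i)}Q_{(s-i)}$ (so $Q_{(r,0)}=Q_{(r)}$); for a strict partition $\lambda$ with $r$ parts, append a part $\lambda_{r+1}=0$ if $r$ is odd, and define $Q_\lambda$ as the Pfaffian of the antisymmetric matrix with $(i,j)$ entry $Q_{(\lambda_i,\lambda_j)}$ for $i<j$. This expresses $Q_\lambda$ as a universal polynomial in the $Q_{(m)}$ (these are the Hall–Littlewood polynomials at $t=-1$, i.e. characters of Sergeev's polynomial representations of $\mathfrak q(N)$ up to powers of $2$). *)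

theory Defs
  imports Complex_Main "HOL-Computational_Algebra.Polynomial" "HOL-Computational_Algebra.Fraction_Field"
begin

text \<open>Instead of multivariate polynomials we work with an arbitrary assignment
  Qv :: nat => 'a of values to the generators Q_(m) (m >= 1) in a commutative ring;
  the value of the universal polynomial Q_lambda under this substitution is schurQ Qv lambda.
  Since substitution is a ring homomorphism, this is exactly the substituted polynomial.\<close>

definition Qone :: "(nat \<Rightarrow> 'a::comm_ring_1) \<Rightarrow> nat \<Rightarrow> 'a" where
  "Qone Qv m = (if m = 0 then 1 else Qv m)"

text \<open>Q_(r,s) for r > s >= 0.\<close>
definition Qpair :: "(nat \<Rightarrow> 'a::comm_ring_1) \<Rightarrow> nat \<Rightarrow> nat \<Rightarrow> 'a" where
  "Qpair Qv r s = Qone Qv r * Qone Qv s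
     + 2 * (\<Sum>i=1..s. (-1)^i * Qone Qv (r + i) * Qone Qv (s - i))"

text \<open>Pfaffian of the antisymmetric matrix whose entries above the diagonal are
  M x y, indexed by the (ordered) list of indices xs, via expansion along the first row:
  Pf = sum over j of (-1)^j a_{1j} Pf(minor).\<close>
function pf :: "('b \<Rightarrow> 'b \<Rightarrow> 'a::comm_ring_1) \<Rightarrow> 'b list \<Rightarrow> 'a" where
  "pf M [] = 1"
| "pf M (x # xs) =
     (\<Sum>k<length xs. (-1)^k * M x (xs ! k) * pf M (take k xs @ drop (Suc k) xs))"
  by pat_completeness auto
termination
  by (relation "measure (\<lambda>(M, xs). length xs)") auto

definition pad_even :: "nat list \<Rightarrow> nat list" where
  "pad_even lam = (if odd (length lam) then lam @ [0] else lam)"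

definition schurQ :: "(nat \<Rightarrow> 'a::comm_ring_1) \<Rightarrow> nat list \<Rightarrow> 'a" where
  "schurQ Qv lam =
     (let mu = pad_even lam in
      pf (\<lambda>i j. Qpair Qv (mu ! i) (mu ! j)) [0..<length mu])"

definition strict_partition :: "nat list \<Rightarrow> bool" where
  "strict_partition lam \<longleftrightarrow> sorted_wrt (>) lam \<and> (\<forall>x\<in>set lam. x > 0)"

type_synonym ratfun = "complex poly fract"

definition cst :: "complex \<Rightarrow> ratfun" where
  "cst c = Fract [:c:] 1"

definition qv :: ratfun where
  "qv = Fract [:0, 1:] 1"

definition qint :: "int \<Rightarrow> ratfun" where
  "qint k = (qv powi k - qv powi (-k)) / (qv - inverse qv)"

definition aq :: "nat \<Rightarrow> ratfun" where
  "aq m = (\<Prod>j=1..m. cst \<i> *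
      ((qv powi (int j - 1) + qv powi (1 - int j)) / (qv powi (int j) - qv powi (- int j))))"

end

theory Submission
  imports Defs
begin

(* Put y_m = (1 - q^(2m)) / (1 + q^(2m)), so that y_0 = 0 and
   [r - s] / [r + s] = (y_r - y_s) / (y_r + y_s).
   The two-part functions specialise to Q_(r,s) = a_r a_s (y_r - y_s) / (y_r + y_s): by induction on s,
   using the recursion Q_(r,s+1) + Q_(r+1,s) = Q_(r) Q_(s+1) - Q_(r+1) Q_(s) and the fact that
   (a_(s+1) / a_s) (1 - (y_r - y_(s+1)) / (y_r + y_(s+1))) is symmetric in r and s.
   The factors a_(lambda_i) then come out of the Pfaffian, and what remains is Schur's Pfaffian
   Pf[(y_i - y_j) / (y_i + y_j)] = prod_(i<j) (y_i - y_j) / (y_i + y_j), proved by expansion along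
   the first row and a partial fraction identity. A padded zero part contributes a_0 = 1 and
   (y - y_0) / (y + y_0) = 1. *)

section \<open>Schur's Pfaffian identity\<close>

definition schur_ratio :: "'a::field \<Rightarrow> 'a \<Rightarrow> 'a" where
  "schur_ratio x y = (x - y) / (x + y)"

lemma schur_ratio_antisym: "schur_ratio y x = - schur_ratio x y"
proof -
  have "y - x = - (x - y)" "y + x = x + y" by simp_all
  then show ?thesis unfolding schur_ratio_def by (simp only: minus_divide_left)
qed

lemma schur_ratio_minus_left: "schur_ratio (- x) y = inverse (schur_ratio x y)"
proof -
  have "- x - y = - (x + y)" "- x + y = - (x - y)" by simp_all
  then show ?thesis unfolding schur_ratio_def by (simp only: minus_divide_divide inverse_divide)
qed

lemma schur_ratio_zero_right: "x \<noteq> 0 \<Longrightarrow> schur_ratio x 0 = 1"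
  by (simp add: schur_ratio_def)

lemma schur_ratio_neq_0: "x \<noteq> y \<Longrightarrow> x + y \<noteq> 0 \<Longrightarrow> schur_ratio x y \<noteq> 0"
  by (simp add: schur_ratio_def)

lemma schur_ratio_add:
  assumes "x + a \<noteq> 0" "a + z \<noteq> 0" "x + z \<noteq> 0"
  shows "schur_ratio x a + schur_ratio a z = schur_ratio x z * (1 + schur_ratio x a * schur_ratio a z)"
  using assms unfolding schur_ratio_def by (simp add: divide_simps) (simp add: algebra_simps)

lemma schur_ratio_div:
  assumes "x + a \<noteq> 0" "x + z \<noteq> 0" "a \<noteq> z" "a + z \<noteq> 0"
  shows "schur_ratio x a / schur_ratio a z
    = schur_ratio x z / schur_ratio a z + schur_ratio x z * schur_ratio x a - 1"
  using schur_ratio_add[OF assms(1,4,2)] schur_ratio_neq_0[OF assms(3,4)] by (simp add: field_simps)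

lemma schur_partial_fractions:
  fixes C :: "'a::field set"
  assumes "finite C" and "\<And>b c. b \<in> C \<Longrightarrow> c \<in> C \<Longrightarrow> b \<noteq> c \<Longrightarrow> b + c \<noteq> 0"
  shows "(\<forall>x. (\<forall>c\<in>C. x + c \<noteq> 0) \<longrightarrow>
            (\<Sum>c\<in>C. schur_ratio x c / (\<Prod>b\<in>C - {c}. schur_ratio c b))
              = (\<Prod>c\<in>C. schur_ratio x c) - (if even (card C) then 1 else 0))
       \<and> (\<Sum>c\<in>C. 1 / (\<Prod>b\<in>C - {c}. schur_ratio c b)) = (if odd (card C) then 1 else 0)"
  using assms
proof (induction C rule: finite_induct)
  case (insert z F)
  define D where "D c = (\<Prod>b\<in>F - {c}. schur_ratio c b)" for c
  define Dz where "Dz = (\<Prod>b\<in>F. schur_ratio z b)"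
  define e :: 'a where "e = (if even (card F) then 1 else 0)"
  have z: "c \<noteq> z" "c + z \<noteq> 0" if "c \<in> F" for c
    using insert that by (auto simp: add.commute)
  have IH_frac: "(\<Sum>c\<in>F. schur_ratio x c / D c) = (\<Prod>c\<in>F. schur_ratio x c) - e"
    if "\<forall>c\<in>F. x + c \<noteq> 0" for x
    using insert that unfolding D_def e_def by blast
  have IH_one: "(\<Sum>c\<in>F. 1 / D c) = 1 - e"
    using insert unfolding D_def e_def by auto
  have D_insert: "(\<Prod>b\<in>insert z F - {c}. schur_ratio c b) = schur_ratio c z * D c" if "c \<in> F" for c
  proof -
    have "insert z F - {c} = insert z (F - {c})" using insert.hyps that by auto
    then show ?thesis using insert.hyps by (simp add: D_def)
  qed
  have sum_z: "(\<Sum>c\<in>F. 1 / (schur_ratio c z * D c)) = e - 1 / Dz"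
  proof -
    have "1 / (schur_ratio c z * D c) = - (schur_ratio (- z) c / D c)" for c
      using schur_ratio_antisym[of z c] by (simp add: schur_ratio_minus_left field_simps)
    moreover have "(\<Prod>c\<in>F. schur_ratio (- z) c) = 1 / Dz"
      by (simp add: Dz_def schur_ratio_minus_left prod_inversef[symmetric] divide_inverse)
    ultimately show ?thesis
      using IH_frac[of "- z"] z(1) by (force simp: sum_negf)
  qed
  have "(\<Sum>c\<in>F. schur_ratio x c / (schur_ratio c z * D c))
      = schur_ratio x z * (\<Prod>c\<in>F. schur_ratio x c) - (1 - e) - schur_ratio x z / Dz"
    if x: "\<forall>c\<in>insert z F. x + c \<noteq> 0" for x
  proof -
    have "schur_ratio x c / (schur_ratio c z * D c) = schur_ratio x z * (1 / (schur_ratio c z * D c))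
        + schur_ratio x z * (schur_ratio x c / D c) - 1 / D c" if "c \<in> F" for c
      using schur_ratio_div[of x c z] x z[OF that] that
      by (simp add: add_divide_distrib diff_divide_distrib flip: divide_divide_eq_left)
    then have "(\<Sum>c\<in>F. schur_ratio x c / (schur_ratio c z * D c))
        = schur_ratio x z * (\<Sum>c\<in>F. 1 / (schur_ratio c z * D c))
          + schur_ratio x z * (\<Sum>c\<in>F. schur_ratio x c / D c) - (\<Sum>c\<in>F. 1 / D c)"
      by (simp add: sum_distrib_left sum.distrib sum_subtractf)
    moreover have "\<forall>c\<in>F. x + c \<noteq> 0" using x by simp
    ultimately show ?thesis
      unfolding IH_one sum_z by (simp add: IH_frac algebra_simps)
  qed
  with insert.hyps D_insert sum_z show ?case
    by (simp add: Dz_def e_def)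
qed simp

abbreviation remove_nth :: "nat \<Rightarrow> 'a list \<Rightarrow> 'a list" where
  "remove_nth k xs \<equiv> take k xs @ drop (Suc k) xs"

lemma remove_nth_induct [case_names Nil Cons]:
  assumes "P []"
    and "\<And>x xs. (\<And>k. k < length xs \<Longrightarrow> P (remove_nth k xs)) \<Longrightarrow> P (x # xs)"
  shows "P xs"
proof (induction "length xs" arbitrary: xs rule: less_induct)
  case less
  then show ?case by (cases xs) (auto intro: assms)
qed

lemma set_remove_nth_subset: "set (remove_nth k xs) \<subseteq> set xs"
  using set_take_subset set_drop_subset by fastforce

lemma
  assumes "distinct xs" "k < length xs"
  shows distinct_remove_nth: "distinct (remove_nth k xs)"
    and set_remove_nth: "set (remove_nth k xs) = set xs - {xs ! k}"
proof -
  have "distinct (take k xs @ xs ! k # drop (Suc k) xs)"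
    using assms by (simp flip: id_take_nth_drop)
  moreover have "set xs = set (take k xs @ xs ! k # drop (Suc k) xs)"
    using assms by (simp flip: id_take_nth_drop)
  ultimately show "distinct (remove_nth k xs)" "set (remove_nth k xs) = set xs - {xs ! k}"
    by auto
qed

lemma sorted_wrt_remove_nth: "sorted_wrt R xs \<Longrightarrow> sorted_wrt R (remove_nth k xs)"
proof (cases "k < length xs")
  case True
  assume "sorted_wrt R xs"
  then have "sorted_wrt R (take k xs @ xs ! k # drop (Suc k) xs)"
    using True by (simp flip: id_take_nth_drop)
  then show ?thesis by (simp add: sorted_wrt_append)
qed simp

lemma prod_list_remove_nth:
  fixes f :: "'a \<Rightarrow> 'b::comm_monoid_mult"
  assumes "k < length xs"
  shows "(\<Prod>x\<leftarrow>xs. f x) = f (xs ! k) * (\<Prod>x\<leftarrow>remove_nth k xs. f x)"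
proof -
  have "(\<Prod>x\<leftarrow>xs. f x) = (\<Prod>x\<leftarrow>take k xs @ xs ! k # drop (Suc k) xs. f x)"
    using assms by (simp flip: id_take_nth_drop)
  also have "\<dots> = f (xs ! k) * (\<Prod>x\<leftarrow>remove_nth k xs. f x)"
    by (simp add: mult.left_commute)
  finally show ?thesis .
qed

lemma pf_map: "pf M (map f xs) = pf (\<lambda>a b. M (f a) (f b)) xs"
  by (induction xs rule: remove_nth_induct) (simp_all add: take_map drop_map flip: map_append)

lemma pf_cong_sorted:
  assumes "sorted_wrt R xs" and "\<And>a b. a \<in> set xs \<Longrightarrow> b \<in> set xs \<Longrightarrow> R a b \<Longrightarrow> M a b = N a b"
  shows "pf M xs = pf N xs"
  using assms
proof (induction xs rule: remove_nth_induct)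
  case (Cons x xs)
  have "pf M (remove_nth k xs) = pf N (remove_nth k xs)" if "k < length xs" for k
  proof (rule Cons.IH[OF that])
    show "sorted_wrt R (remove_nth k xs)"
      by (rule sorted_wrt_remove_nth) (use Cons.prems(1) in simp)
    show "M a b = N a b" if "a \<in> set (remove_nth k xs)" "b \<in> set (remove_nth k xs)" "R a b" for a b
      using Cons.prems(2) that set_remove_nth_subset[of k xs] by auto
  qed
  moreover have "M x (xs ! k) = N x (xs ! k)" if "k < length xs" for k
    using Cons.prems that by simp
  ultimately show ?case by simp
qed simp

lemma pf_scale: "pf (\<lambda>a b. c a * c b * M a b) xs = (\<Prod>x\<leftarrow>xs. c x) * pf M xs"
proof (induction xs rule: remove_nth_induct)
  case (Cons x xs)
  have "(-1) ^ k * (c x * c (xs ! k) * M x (xs ! k)) * pf (\<lambda>a b. c a * c b * M a b) (remove_nth k xs)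
      = (\<Prod>y\<leftarrow>x # xs. c y) * ((-1) ^ k * M x (xs ! k) * pf M (remove_nth k xs))"
    if "k < length xs" for k
    using Cons.IH[OF that] prod_list_remove_nth[OF that, of c] by (simp add: ac_simps)
  then show ?case by (simp add: sum_distrib_left)
qed simp

fun pairwise_prod :: "('a \<Rightarrow> 'a \<Rightarrow> 'b::comm_monoid_mult) \<Rightarrow> 'a list \<Rightarrow> 'b" where
  "pairwise_prod F [] = 1"
| "pairwise_prod F (x # xs) = (\<Prod>y\<leftarrow>xs. F x y) * pairwise_prod F xs"

lemma pairwise_prod_map: "pairwise_prod F (map f xs) = pairwise_prod (\<lambda>a b. F (f a) (f b)) xs"
  by (induction xs) (simp_all add: comp_def)

lemma pairwise_prod_cong_sorted:
  assumes "sorted_wrt R xs" and "\<And>a b. a \<in> set xs \<Longrightarrow> b \<in> set xs \<Longrightarrow> R a b \<Longrightarrow> F a b = G a b"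
  shows "pairwise_prod F xs = pairwise_prod G xs"
  using assms
proof (induction xs)
  case (Cons x xs)
  then have "map (F x) xs = map (G x) xs" by (intro map_cong) auto
  moreover have "pairwise_prod F xs = pairwise_prod G xs" using Cons by simp
  ultimately show ?case by (simp only: pairwise_prod.simps)
qed simp

lemma pairwise_prod_snoc:
  "pairwise_prod F (xs @ [z]) = pairwise_prod F xs * (\<Prod>x\<leftarrow>xs. F x z)"
  by (induction xs) (simp_all add: ac_simps)

lemma pairwise_prod_remove_nth:
  fixes F :: "'a \<Rightarrow> 'a \<Rightarrow> 'b::comm_ring_1"
  assumes antisym: "\<And>a b. F b a = - F a b" and "k < length xs"
  shows "pairwise_prod F xs
    = (-1) ^ k * (\<Prod>y\<leftarrow>remove_nth k xs. F (xs ! k) y) * pairwise_prod F (remove_nth k xs)"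
  using assms(2)
proof (induction xs arbitrary: k)
  case (Cons x xs)
  show ?case
  proof (cases k)
    case (Suc j)
    then have j: "j < length xs" using Cons.prems by simp
    have "(\<Prod>y\<leftarrow>xs. F x y) = F x (xs ! j) * (\<Prod>y\<leftarrow>remove_nth j xs. F x y)"
      by (rule prod_list_remove_nth[OF j])
    then show ?thesis
      using Cons.IH[OF j] Suc antisym[of x "xs ! j"] by (simp add: ac_simps)
  qed simp
qed simp

lemma pairwise_prod_conv_nth:
  "pairwise_prod F xs = (\<Prod>i<length xs. \<Prod>j\<in>{i<..<length xs}. F (xs ! i) (xs ! j))"
proof (induction xs)
  case (Cons x xs)
  have "(\<Prod>i<Suc (length xs). \<Prod>j=Suc i..<Suc (length xs). F ((x # xs) ! i) ((x # xs) ! j))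
      = (\<Prod>j<length xs. F x (xs ! j)) * (\<Prod>i<length xs. \<Prod>j=Suc i..<length xs. F (xs ! i) (xs ! j))"
    unfolding prod.lessThan_Suc_shift prod.shift_bounds_Suc_ivl by (simp add: atLeast0LessThan)
  moreover have "(\<Prod>j<length xs. F x (xs ! j)) = (\<Prod>y\<leftarrow>xs. F x y)"
    by (simp add: prod.list_conv_set_nth atLeast0LessThan)
  ultimately show ?case
    using Cons.IH by (simp add: atLeastSucLessThan_greaterThanLessThan)
qed simp

lemma pf_Cons_pairwise_prod_minors:
  fixes M :: "'a \<Rightarrow> 'a \<Rightarrow> 'b::field"
  assumes antisym: "\<And>a b. M b a = - M a b" and "distinct xs"
    and nonzero: "\<And>a b. a \<in> set xs \<Longrightarrow> b \<in> set xs \<Longrightarrow> a \<noteq> b \<Longrightarrow> M a b \<noteq> 0"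
    and minors: "\<And>k. k < length xs \<Longrightarrow> pf M (remove_nth k xs) = pairwise_prod M (remove_nth k xs)"
  shows "pf M (x # xs) = pairwise_prod M xs * (\<Sum>c\<in>set xs. M x c / (\<Prod>b\<in>set xs - {c}. M c b))"
proof -
  define D where "D c = (\<Prod>b\<in>set xs - {c}. M c b)" for c
  have "(-1) ^ k * M x (xs ! k) * pf M (remove_nth k xs) = pairwise_prod M xs * (M x (xs ! k) / D (xs ! k))"
    if k: "k < length xs" for k
  proof -
    let ?c = "xs ! k" and ?R = "remove_nth k xs"
    have "set ?R = set xs - {?c}" "distinct ?R"
      using assms(2) k by (intro set_remove_nth distinct_remove_nth; simp)+
    then have "(\<Prod>y\<leftarrow>?R. M ?c y) = D ?c"
      unfolding D_def by (metis prod.distinct_set_conv_list)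
    then have "pairwise_prod M xs = (-1) ^ k * D ?c * pairwise_prod M ?R"
      using pairwise_prod_remove_nth[where F = M, OF antisym k] by simp
    moreover have "D ?c \<noteq> 0"
      using nonzero k by (auto simp: D_def)
    ultimately show ?thesis
      using minors[OF k] by (simp add: field_simps)
  qed
  then have "pf M (x # xs) = pairwise_prod M xs * (\<Sum>k<length xs. M x (xs ! k) / D (xs ! k))"
    by (simp add: sum_distrib_left)
  also have "(\<Sum>k<length xs. M x (xs ! k) / D (xs ! k)) = (\<Sum>c\<in>set xs. M x c / D c)"
    using assms(2) by (simp add: sum.distinct_set_conv_list sum_list_sum_nth atLeast0LessThan)
  finally show ?thesis by (simp add: D_def)
qed

lemma pf_schur_ratio:
  fixes xs :: "'a::field list"
  assumes "distinct xs" and "even (length xs)"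
    and "\<And>a b. a \<in> set xs \<Longrightarrow> b \<in> set xs \<Longrightarrow> a \<noteq> b \<Longrightarrow> a + b \<noteq> 0"
  shows "pf schur_ratio xs = pairwise_prod schur_ratio xs"
  using assms
proof (induction xs rule: remove_nth_induct)
  case (Cons x xs)
  have sums: "a + b \<noteq> 0" if "a \<in> set xs" "b \<in> set xs" "a \<noteq> b" for a b
    using Cons.prems(3) that by simp
  have "pf schur_ratio (x # xs)
      = pairwise_prod schur_ratio xs * (\<Sum>c\<in>set xs. schur_ratio x c / (\<Prod>b\<in>set xs - {c}. schur_ratio c b))"
  proof (rule pf_Cons_pairwise_prod_minors[OF schur_ratio_antisym])
    show "distinct xs" using Cons.prems(1) by simp
    show "schur_ratio a b \<noteq> 0" if "a \<in> set xs" "b \<in> set xs" "a \<noteq> b" for a b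
      using that sums by (simp add: schur_ratio_neq_0)
    show "pf schur_ratio (remove_nth k xs) = pairwise_prod schur_ratio (remove_nth k xs)"
      if k: "k < length xs" for k
    proof (rule Cons.IH[OF k])
      show "distinct (remove_nth k xs)" using Cons.prems(1) k by (intro distinct_remove_nth) simp_all
      show "even (length (remove_nth k xs))" using Cons.prems(2) k by simp
      show "a + b \<noteq> 0" if "a \<in> set (remove_nth k xs)" "b \<in> set (remove_nth k xs)" "a \<noteq> b" for a b
        using sums that set_remove_nth_subset[of k xs] by blast
    qed
  qed
  also have "\<dots> = pairwise_prod schur_ratio xs * (\<Prod>c\<in>set xs. schur_ratio x c)"
  proof -
    have "\<forall>c\<in>set xs. x + c \<noteq> 0" using Cons.prems by auto
    moreover have "odd (card (set xs))" using Cons.prems by (simp add: distinct_card)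
    ultimately show ?thesis
      using conjunct1[OF schur_partial_fractions[of "set xs", OF _ sums]] by simp
  qed
  finally show ?case
    using Cons.prems(1) by (simp add: prod.distinct_set_conv_list mult.commute)
qed simp

section \<open>Specialisation at the rational functions a_m\<close>

lemma Qpair_Suc_right:
  "Qpair Qv r (Suc s)
    = Qone Qv r * Qone Qv (Suc s) - Qone Qv (Suc r) * Qone Qv s - Qpair Qv (Suc r) s"
proof -
  let ?a = "Qone Qv"
  have "(\<Sum>i=1..Suc s. (-1) ^ i * ?a (r + i) * ?a (Suc s - i))
      = - (?a (Suc r) * ?a s) + (\<Sum>i=Suc 1..Suc s. (-1) ^ i * ?a (r + i) * ?a (Suc s - i))"
    by (subst sum.atLeast_Suc_atMost) simp_all
  also have "(\<Sum>i=Suc 1..Suc s. (-1) ^ i * ?a (r + i) * ?a (Suc s - i))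
      = (\<Sum>i=1..s. (-1) ^ Suc i * ?a (r + Suc i) * ?a (Suc s - Suc i))"
    by (rule sum.shift_bounds_cl_Suc_ivl)
  also have "\<dots> = - (\<Sum>i=1..s. (-1) ^ i * ?a (Suc r + i) * ?a (s - i))"
    by (simp add: sum_negf[symmetric])
  finally have sum_Suc: "(\<Sum>i=1..Suc s. (-1) ^ i * ?a (r + i) * ?a (Suc s - i))
      = - (?a (Suc r) * ?a s) - (\<Sum>i=1..s. (-1) ^ i * ?a (Suc r + i) * ?a (s - i))"
    by simp
  show ?thesis
    unfolding Qpair_def sum_Suc by (simp add: algebra_simps)
qed

instance fract :: ("{idom, ring_char_0}") field_char_0
proof
  show "inj (of_nat :: nat \<Rightarrow> 'a fract)"
    by (rule injI) (simp add: of_nat_fract eq_fract)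
qed

definition cayley :: "'a::field \<Rightarrow> 'a" where
  "cayley t = (1 - t) / (1 + t)"

lemma cayley_diff:
  "1 + s \<noteq> 0 \<Longrightarrow> 1 + t \<noteq> 0 \<Longrightarrow> cayley s - cayley t = 2 * (t - s) / ((1 + s) * (1 + t))"
  by (simp add: cayley_def field_simps)

lemma cayley_add:
  "1 + s \<noteq> 0 \<Longrightarrow> 1 + t \<noteq> 0 \<Longrightarrow> cayley s + cayley t = 2 * (1 - s * t) / ((1 + s) * (1 + t))"
  by (simp add: cayley_def field_simps)

context
  fixes s t :: "'a::field_char_0"
  assumes s: "1 + s \<noteq> 0" and t: "1 + t \<noteq> 0"
begin

lemma cayley_eq_iff: "cayley s = cayley t \<longleftrightarrow> s = t"
  using cayley_diff[OF s t] s t by auto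

lemma cayley_add_eq_0_iff: "cayley s + cayley t = 0 \<longleftrightarrow> s * t = 1"
  using cayley_add[OF s t] s t by auto

lemma schur_ratio_cayley: "schur_ratio (cayley s) (cayley t) = (t - s) / (1 - s * t)"
proof -
  have "(1 + s) * (1 + t) \<noteq> 0" using s t by simp
  then have "schur_ratio (cayley s) (cayley t) = (2 * (t - s)) / (2 * (1 - s * t))"
    by (simp add: schur_ratio_def cayley_diff[OF s t] cayley_add[OF s t])
  then show ?thesis by (simp only: mult_divide_mult_cancel_left_if) simp
qed

end

lemma qv_power: "qv ^ n = Fract (monom 1 n) 1"
proof (induction n)
  case (Suc n)
  have "[:0, 1:] * monom (1::complex) n = monom 1 (Suc n)"
    by (simp add: monom_Suc)
  with Suc show ?case by (simp add: qv_def)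
qed (simp add: One_fract_def)

lemma qv_power_eq_iff: "qv ^ m = qv ^ n \<longleftrightarrow> m = n"
  by (simp add: qv_power eq_fract monom_eq_iff')

lemma qv_power_neq_minus_one: "qv ^ n \<noteq> -1"
proof
  assume "qv ^ n = -1"
  then have "monom (1::complex) n = - 1"
    by (simp add: qv_power One_fract_def eq_fract)
  then have "coeff (monom (1::complex) n) n = coeff (- 1) n" by simp
  then show False by (cases n) simp_all
qed

lemma qv_neq_0: "qv \<noteq> 0"
  by (simp add: qv_def Zero_fract_def eq_fract)

lemma one_add_qv_power_neq_0: "1 + qv ^ n \<noteq> 0"
  using qv_power_neq_minus_one[of n] by (auto simp: add_eq_0_iff)

lemma qv_power_eq_1_iff: "qv ^ n = 1 \<longleftrightarrow> n = 0"
  using qv_power_eq_iff[of n 0] by simp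

definition yv :: "nat \<Rightarrow> ratfun" where
  "yv m = cayley (qv ^ (2 * m))"

lemma yv_0: "yv 0 = 0"
  by (simp add: yv_def cayley_def)

lemma yv_eq_iff: "yv r = yv s \<longleftrightarrow> r = s"
  by (simp add: yv_def cayley_eq_iff one_add_qv_power_neq_0 qv_power_eq_iff)

lemma yv_add_neq_0: "r + s \<noteq> 0 \<Longrightarrow> yv r + yv s \<noteq> 0"
  by (simp add: yv_def cayley_add_eq_0_iff one_add_qv_power_neq_0 qv_power_eq_1_iff
      flip: power_add)

lemma schur_ratio_yv:
  "schur_ratio (yv r) (yv s) = (qv ^ (2 * s) - qv ^ (2 * r)) / (1 - qv ^ (2 * (r + s)))"
  by (simp add: yv_def schur_ratio_cayley one_add_qv_power_neq_0 distrib_left power_add)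

lemma qint_of_nat: "qint (int n) = (qv ^ n - inverse (qv ^ n)) / (qv - inverse qv)"
  by (simp add: qint_def power_int_minus)

lemma diff_inverse_div_diff_inverse:
  fixes X Z :: "'a::field"
  assumes "X \<noteq> 0" "Z \<noteq> 0"
  shows "(X / Z - inverse (X / Z)) / (X * Z - inverse (X * Z)) = (Z\<^sup>2 - X\<^sup>2) / (1 - X\<^sup>2 * Z\<^sup>2)"
proof -
  have "X / Z - inverse (X / Z) = (X\<^sup>2 - Z\<^sup>2) / (X * Z)"
    "X * Z - inverse (X * Z) = (X\<^sup>2 * Z\<^sup>2 - 1) / (X * Z)"
    using assms by (simp_all add: field_simps power2_eq_square)
  then have "(X / Z - inverse (X / Z)) / (X * Z - inverse (X * Z)) = (X\<^sup>2 - Z\<^sup>2) / (X\<^sup>2 * Z\<^sup>2 - 1)"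
    using assms by simp
  also have "\<dots> = (Z\<^sup>2 - X\<^sup>2) / (1 - X\<^sup>2 * Z\<^sup>2)"
    by (metis minus_diff_eq minus_divide_divide)
  finally show ?thesis .
qed

lemma qint_ratio:
  assumes "s < r"
  shows "qint (int r - int s) / qint (int r + int s) = schur_ratio (yv r) (yv s)"
proof -
  define X Z where "X = qv ^ r" and "Z = qv ^ s"
  have XZ: "X \<noteq> 0" "Z \<noteq> 0" using qv_neq_0 by (simp_all add: X_def Z_def)
  have "qv - inverse qv \<noteq> 0"
    using qv_neq_0 qv_power_eq_1_iff[of 2] by (auto simp: field_simps power2_eq_square)
  moreover have "int r - int s = int (r - s)" "int r + int s = int (r + s)"
    using assms by simp_all
  moreover have "qv ^ (r - s) = X / Z" "qv ^ (r + s) = X * Z"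
    using assms qv_neq_0 by (simp_all add: X_def Z_def power_diff power_add)
  ultimately have "qint (int r - int s) / qint (int r + int s)
      = (X / Z - inverse (X / Z)) / (X * Z - inverse (X * Z))"
    by (simp only: qint_of_nat) simp
  also have "\<dots> = (Z\<^sup>2 - X\<^sup>2) / (1 - X\<^sup>2 * Z\<^sup>2)"
    using XZ by (rule diff_inverse_div_diff_inverse)
  also have "\<dots> = schur_ratio (yv r) (yv s)"
    by (simp add: schur_ratio_yv X_def Z_def power_add distrib_left power_even_eq)
  finally show ?thesis .
qed

lemma aq_0: "aq 0 = 1"
  by (simp add: aq_def)

definition aq_ratio :: "nat \<Rightarrow> ratfun" where
  "aq_ratio m = cst \<i> * qv * (1 + qv ^ (2 * m)) / (qv ^ (2 * Suc m) - 1)"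

lemma add_inverse_div_diff_inverse:
  fixes q X :: "'a::field"
  assumes "q \<noteq> 0" "X \<noteq> 0"
  shows "(X + inverse X) / (q * X - inverse (q * X)) = q * (1 + X\<^sup>2) / ((q * X)\<^sup>2 - 1)"
proof -
  have "X + inverse X = (1 + X\<^sup>2) / X" "q * X - inverse (q * X) = ((q * X)\<^sup>2 - 1) / (q * X)"
    using assms by (simp_all add: field_simps power2_eq_square)
  then show ?thesis using assms by simp
qed

lemma aq_Suc: "aq (Suc m) = aq m * aq_ratio m"
proof -
  have "int (Suc m) - 1 = int m" "1 - int (Suc m) = - int m" by simp_all
  then have factor: "qv powi (int (Suc m) - 1) + qv powi (1 - int (Suc m)) = qv ^ m + inverse (qv ^ m)"
    "qv powi int (Suc m) - qv powi (- int (Suc m)) = qv * qv ^ m - inverse (qv * qv ^ m)"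
    by (simp_all only: power_int_minus power_int_of_nat power_Suc)
  have "aq (Suc m) = aq m * (cst \<i> * ((qv ^ m + inverse (qv ^ m)) / (qv * qv ^ m - inverse (qv * qv ^ m))))"
    unfolding aq_def prod.cl_ivl_Suc factor by simp
  also have "\<dots> = aq m * (cst \<i> * (qv * (1 + (qv ^ m)\<^sup>2) / ((qv * qv ^ m)\<^sup>2 - 1)))"
    unfolding add_inverse_div_diff_inverse[OF qv_neq_0 power_not_zero[OF qv_neq_0]] ..
  also have "\<dots> = aq m * aq_ratio m"
  proof -
    have "qv ^ (2 * m) = (qv ^ m)\<^sup>2" "qv ^ (2 * Suc m) = (qv * qv ^ m)\<^sup>2"
      by (simp_all only: power_even_eq power_Suc)
    then show ?thesis by (simp add: aq_ratio_def mult.assoc)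
  qed
  finally show ?thesis .
qed

lemma aq_ratio_mult_one_minus_schur_ratio:
  "aq_ratio s * (1 - schur_ratio (yv r) (yv (Suc s)))
    = - (cst \<i> * qv * (1 + qv ^ (2 * r)) * (1 + qv ^ (2 * s)) / (1 - qv ^ (2 * Suc (r + s))))"
proof -
  have key: "c * (1 + B) / (B' - 1) * (1 - (B' - A) / (1 - A * B'))
      = - (c * (1 + A) * (1 + B) / (1 - A * B'))"
    if "B' \<noteq> 1" "A * B' \<noteq> 1" for A B B' c :: ratfun
  proof -
    have "1 - A * B' \<noteq> 0" and B': "B' - 1 \<noteq> 0" using that by simp_all
    then have "1 - (B' - A) / (1 - A * B') = - ((1 + A) * (B' - 1) / (1 - A * B'))"
      by (simp add: divide_simps) (simp add: algebra_simps)
    with B' show ?thesis by (simp add: ac_simps)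
  qed
  have "qv ^ (2 * (r + Suc s)) = qv ^ (2 * r) * qv ^ (2 * Suc s)"
    "qv ^ (2 * Suc (r + s)) = qv ^ (2 * r) * qv ^ (2 * Suc s)"
    by (simp_all flip: power_add)
  moreover have "qv ^ (2 * Suc s) \<noteq> 1" "qv ^ (2 * r) * qv ^ (2 * Suc s) \<noteq> 1"
    by (simp_all only: qv_power_eq_1_iff flip: power_add) simp_all
  ultimately show ?thesis
    unfolding aq_ratio_def schur_ratio_yv by (simp only:) (rule key)
qed

lemma Qpair_aq: "r + s \<noteq> 0 \<Longrightarrow> Qpair aq r s = aq r * aq s * schur_ratio (yv r) (yv s)"
proof (induction s arbitrary: r)
  case 0
  then have "schur_ratio (yv r) (yv 0) = 1"
    using yv_eq_iff[of r 0] by (simp add: yv_0 schur_ratio_zero_right)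
  then show ?case by (simp add: Qpair_def Qone_def aq_0)
next
  case (Suc s)
  let ?f = "\<lambda>a b. schur_ratio (yv a) (yv b)"
  have Qone_aq: "Qone aq = aq" by (simp add: fun_eq_iff Qone_def aq_0)
  have "Qpair aq r (Suc s) = aq r * aq (Suc s) - aq (Suc r) * aq s * (1 + ?f (Suc r) s)"
    using Qpair_Suc_right[of aq r s] Suc.IH[of "Suc r"] by (simp add: Qone_aq algebra_simps)
  also have "\<dots> = aq r * aq s * (aq_ratio s - aq_ratio r * (1 - ?f s (Suc r)))"
    using schur_ratio_antisym[of "yv s" "yv (Suc r)"] by (simp add: aq_Suc algebra_simps)
  also have "aq_ratio r * (1 - ?f s (Suc r)) = aq_ratio s * (1 - ?f r (Suc s))"
    by (simp add: aq_ratio_mult_one_minus_schur_ratio ac_simps)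
  finally show ?case by (simp add: aq_Suc algebra_simps)
qed

lemma pf_Qpair_aq:
  assumes "sorted_wrt (>) mu" and "even (length mu)"
  shows "pf (Qpair aq) mu
    = (\<Prod>r\<leftarrow>mu. aq r) * pairwise_prod (\<lambda>r s. qint (int r - int s) / qint (int r + int s)) mu"
proof -
  let ?f = "\<lambda>r s. schur_ratio (yv r) (yv s)"
  have "pf (Qpair aq) mu = pf (\<lambda>r s. aq r * aq s * ?f r s) mu"
    using assms(1) by (rule pf_cong_sorted) (simp add: Qpair_aq)
  also have "\<dots> = (\<Prod>r\<leftarrow>mu. aq r) * pf schur_ratio (map yv mu)"
    by (simp add: pf_scale pf_map)
  also have "pf schur_ratio (map yv mu) = pairwise_prod schur_ratio (map yv mu)"
  proof (rule pf_schur_ratio)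
    have "distinct mu"
      using assms(1) by (metis distinct_rev sorted_wrt_rev strict_sorted_iff)
    then show "distinct (map yv mu)"
      by (simp add: distinct_map inj_on_def yv_eq_iff)
    show "even (length (map yv mu))" using assms(2) by simp
    show "a + b \<noteq> 0" if "a \<in> set (map yv mu)" "b \<in> set (map yv mu)" "a \<noteq> b" for a b
    proof -
      from that obtain r s where "a = yv r" "b = yv s" "r \<noteq> s" by auto
      then show ?thesis using yv_add_neq_0[of r s] by auto
    qed
  qed
  also have "\<dots> = pairwise_prod (\<lambda>r s. qint (int r - int s) / qint (int r + int s)) mu"
    unfolding pairwise_prod_map using assms(1) by (rule pairwise_prod_cong_sorted) (simp add: qint_ratio)
  finally show ?thesis .
qed

theorem theorem2p27:
  fixes lam :: "nat list"
  assumes "strict_partition lam"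
  shows "schurQ aq lam =
    (\<Prod>j<length lam. aq (lam ! j)) *
    (\<Prod>i<length lam. \<Prod>j\<in>{i<..<length lam}.
        qint (int (lam ! i) - int (lam ! j)) / qint (int (lam ! i) + int (lam ! j)))"
proof -
  define R where "R r s = qint (int r - int s) / qint (int r + int s)" for r s :: nat
  have lam: "sorted_wrt (>) lam" "\<forall>r\<in>set lam. 0 < r"
    using assms by (simp_all add: strict_partition_def)
  then have mu: "sorted_wrt (>) (pad_even lam)" "even (length (pad_even lam))"
    by (auto simp: pad_even_def sorted_wrt_append)
  have "schurQ aq lam = pf (Qpair aq) (pad_even lam)"
    by (simp add: schurQ_def Let_def map_nth flip: pf_map)
  also have "\<dots> = (\<Prod>r\<leftarrow>pad_even lam. aq r) * pairwise_prod R (pad_even lam)"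
    unfolding R_def using mu by (rule pf_Qpair_aq)
  also have "\<dots> = (\<Prod>r\<leftarrow>lam. aq r) * pairwise_prod R lam"
  proof -
    have "R r 0 = 1" if "r \<in> set lam" for r
      using qint_ratio[of 0 r] lam(2) that yv_eq_iff[of r 0]
      by (simp add: R_def yv_0 schur_ratio_zero_right)
    then have "(\<Prod>r\<leftarrow>lam. R r 0) = 1" by (induction lam) simp_all
    then show ?thesis by (simp add: pad_even_def pairwise_prod_snoc aq_0)
  qed
  finally show ?thesis
    by (simp add: R_def pairwise_prod_conv_nth prod.list_conv_set_nth atLeast0LessThan)
qed

end
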